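(* Let $X$ be a Banach space over $\mathbb{K}\in\{\mathbb{R},\mathbb{C}\}$ and $V\subset X$ an $n$-dimensional subspace ($n\ge1$). Let $A\in B(V)$ satisfy $\|A\|_{w,V}>0$, and let $A_0\in B(X,V)$ satisfy $A_0|_V=A$. Put $B_V(X,V)=\{L\in B(X,V): L|_V=0\}$ and $Z_A=\operatorname{span}[A_0]\oplus B_V(X,V)$. Then the numerical radius $\|\cdot\|_w$ (of operators in $Z_A$ regarded as operators $X\to X$) is a norm on $Z_A$, i.e. $\|L\|_w>0$ for every $L\in Z_A\setminus\{0\}$.
   Context: $B(X,V)$ denotes bounded linear operators $X\to V$, $B(V)=B(V,V)$. For $T\in B(X)$ the numerical radius is $\|T\|_w=\sup\{|x^*(Tx)|:x\in S_X,x^*\in S_{X^*},x^*(x)=1\}$. For $A\in B(V)$, $\|A\|_{w,V}=\sup\{|v^*(Av)|: v^*\in B_{V^*},v\in B_V,v^*(v)=1\}$ (the numerical radius computed in $V$). *)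

theory Defs
  imports "HOL-Analysis.Analysis"
begin

text \<open>The scalar field is any type of class
real_normed_field (complete); by the Gelfand-Mazur theorem these are exactly R and C.
The space is a real Banach space (type class banach) carrying a K-scalar
multiplication sm compatible with the real one and with the norm.\<close>

definition K_normed_space :: "('k::real_normed_field \<Rightarrow> 'a::real_normed_vector \<Rightarrow> 'a) \<Rightarrow> bool" where
  "K_normed_space sm \<longleftrightarrow> vector_space sm
     \<and> (\<forall>r x. sm (of_real r) x = r *\<^sub>R x)
     \<and> (\<forall>c x. norm (sm c x) = norm c * norm x)"

definition K_bounded_op :: "('k::real_normed_field \<Rightarrow> 'a::real_normed_vector \<Rightarrow> 'a) \<Rightarrow> ('a \<Rightarrow> 'a) \<Rightarrow> bool" where
  "K_bounded_op sm T \<longleftrightarrow> Vector_Spaces.linear sm sm T \<and> bounded_linear T"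

definition K_functional :: "('k::real_normed_field \<Rightarrow> 'a::real_normed_vector \<Rightarrow> 'a) \<Rightarrow> ('a \<Rightarrow> 'k) \<Rightarrow> bool" where
  "K_functional sm f \<longleftrightarrow> Vector_Spaces.linear sm (*) f \<and> bounded_linear f"

definition numrad :: "('k::real_normed_field \<Rightarrow> 'a::real_normed_vector \<Rightarrow> 'a) \<Rightarrow> ('a \<Rightarrow> 'a) \<Rightarrow> real" where
  "numrad sm T = Sup {norm (f (T x)) | x f.
      norm x = 1 \<and> K_functional sm f \<and> onorm f = 1 \<and> f x = 1}"

text \<open>Numerical radius of A in B(V), computed in V: functionals on V are
functions whose behaviour is only considered on V (K-linear on V, norm at most 1 on V).\<close>
definition numrad_on :: "('k::real_normed_field \<Rightarrow> 'a::real_normed_vector \<Rightarrow> 'a) \<Rightarrow> 'a set \<Rightarrow> ('a \<Rightarrow> 'a) \<Rightarrow> real" where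
  "numrad_on sm V A = Sup {norm (f (A v)) | v f.
      v \<in> V \<and> norm v \<le> 1
      \<and> (\<forall>u\<in>V. \<forall>w\<in>V. f (u + w) = f u + f w)
      \<and> (\<forall>c. \<forall>u\<in>V. f (sm c u) = c * f u)
      \<and> (\<forall>u\<in>V. norm (f u) \<le> norm u)
      \<and> f v = 1}"

text \<open>A in B(V): bounded K-linear map V -> V (values outside V irrelevant).\<close>
definition K_bounded_op_on :: "('k::real_normed_field \<Rightarrow> 'a::real_normed_vector \<Rightarrow> 'a) \<Rightarrow> 'a set \<Rightarrow> ('a \<Rightarrow> 'a) \<Rightarrow> bool" where
  "K_bounded_op_on sm V A \<longleftrightarrow> A ` V \<subseteq> V
     \<and> (\<forall>u\<in>V. \<forall>w\<in>V. A (u + w) = A u + A w)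
     \<and> (\<forall>c. \<forall>u\<in>V. A (sm c u) = sm c (A u))
     \<and> (\<exists>K. \<forall>u\<in>V. norm (A u) \<le> K * norm u)"

definition BV :: "('k::real_normed_field \<Rightarrow> 'a::real_normed_vector \<Rightarrow> 'a) \<Rightarrow> 'a set \<Rightarrow> ('a \<Rightarrow> 'a) set" where
  "BV sm V = {L. K_bounded_op sm L \<and> range L \<subseteq> V \<and> (\<forall>v\<in>V. L v = 0)}"

definition ZA :: "('k::real_normed_field \<Rightarrow> 'a::real_normed_vector \<Rightarrow> 'a) \<Rightarrow> 'a set \<Rightarrow> ('a \<Rightarrow> 'a) \<Rightarrow> ('a \<Rightarrow> 'a) set" where
  "ZA sm V A0 = {(\<lambda>x. sm c (A0 x) + L' x) | c L'. L' \<in> BV sm V}"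

end

theory Submission
  imports Defs "HOL-Computational_Algebra.Fundamental_Theorem_Algebra"
begin

(* Write L = c A0 + L' with L' in B_V(X,V).
   - If c = 0 then L = L' maps X into V and vanishes on V, so L^2 = 0.  A nonzero
     square-zero operator has positive numerical radius: choose x0 with y = L x0 /= 0,
     push x0 far along y to z = x0 + t y (so L z = y, |z| > |x0|) and test with a
     support functional f at z/|z|.  If f(L(z/|z|)) = 0 then f y = 0, hence
     |z| = |f z| = |f x0| <= |x0|, a contradiction.
   - If c /= 0 then L = c A on V.  Since ||A||_{w,V} > 0 there are v in S_V and a
     norm-one functional g on V with g v = 1 and g (A v) /= 0; a norm-preserving
     extension f of g to X gives f (L v) = c g (A v) /= 0.
   Both cases need the Hahn-Banach theorem over the scalar field K, an arbitrary real
   normed field; it is not available in the imported libraries. *)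

definition hb_extension ::
  "'a::real_normed_vector set \<Rightarrow> ('a \<Rightarrow> real) \<Rightarrow> 'a set \<Rightarrow> ('a \<Rightarrow> real) \<Rightarrow> bool" where
  "hb_extension F u H h \<longleftrightarrow> subspace H \<and> F \<subseteq> H
   \<and> (\<forall>x\<in>H. \<forall>y\<in>H. h (x + y) = h x + h y)
   \<and> (\<forall>x\<in>H. \<forall>r. h (r *\<^sub>R x) = r * h x)
   \<and> (\<forall>x\<in>F. h x = u x) \<and> (\<forall>x\<in>H. h x \<le> norm x)"

lemma hb_extensionD:
  assumes "hb_extension F u H h"
  shows "subspace H" "F \<subseteq> H" "\<And>x y. x \<in> H \<Longrightarrow> y \<in> H \<Longrightarrow> h (x + y) = h x + h y"
    "\<And>x r. x \<in> H \<Longrightarrow> h (r *\<^sub>R x) = r * h x" "\<And>x. x \<in> F \<Longrightarrow> h x = u x"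
    "\<And>x. x \<in> H \<Longrightarrow> h x \<le> norm x"
  using assms unfolding hb_extension_def by auto

text \<open>The value at the new direction \<open>x0\<close> can be chosen between the two one-sided bounds.\<close>
lemma hb_step_constant:
  fixes h :: "'a::real_normed_vector \<Rightarrow> real"
  assumes ext: "hb_extension F u H h"
  obtains c where "\<And>y. y \<in> H \<Longrightarrow> h y - norm (y - x0) \<le> c"
    and "\<And>w. w \<in> H \<Longrightarrow> c \<le> norm (w + x0) - h w"
proof -
  note hb = hb_extensionD[OF ext]
  have key: "h y - norm (y - x0) \<le> norm (w + x0) - h w" if "y \<in> H" "w \<in> H" for y w
  proof -
    have "h y + h w = h (y + w)" using hb(3) that by simp
    also have "\<dots> \<le> norm (y + w)" using hb(6) that subspace_add[OF hb(1)] by auto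
    also have "\<dots> \<le> norm (y - x0) + norm (w + x0)"
      using norm_triangle_ineq[of "y - x0" "w + x0"] by simp
    finally show ?thesis by simp
  qed
  define S where "S = {h y - norm (y - x0) | y. y \<in> H}"
  have H0: "0 \<in> H" using subspace_0[OF hb(1)] .
  have "S \<noteq> {}" using H0 unfolding S_def by auto
  moreover have "bdd_above S" unfolding S_def bdd_above_def using key[OF _ H0] by auto
  ultimately show ?thesis
    by (intro that[of "Sup S"] cSup_upper cSup_least) (auto simp: S_def key)
qed

text \<open>With such a value the extension to \<open>H + \<real> x0\<close> stays dominated by the norm.\<close>
lemma hb_line_bound:
  fixes h :: "'a::real_normed_vector \<Rightarrow> real"
  assumes sH: "subspace H" and hom: "\<And>x r. x \<in> H \<Longrightarrow> h (r *\<^sub>R x) = r * h x"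
    and dom: "\<And>x. x \<in> H \<Longrightarrow> h x \<le> norm x"
    and lo: "\<And>y. y \<in> H \<Longrightarrow> h y - norm (y - x0) \<le> c"
    and up: "\<And>w. w \<in> H \<Longrightarrow> c \<le> norm (w + x0) - h w"
    and y: "y \<in> H"
  shows "h y + t * c \<le> norm (y + t *\<^sub>R x0)"
proof (cases t "0 :: real" rule: linorder_cases)
  case equal
  then show ?thesis using dom y by simp
next
  case greater
  define w where "w = inverse t *\<^sub>R y"
  have wH: "w \<in> H" unfolding w_def using subspace_scale[OF sH y] .
  have yw: "y = t *\<^sub>R w" unfolding w_def using greater by simp
  have "t * c \<le> t * (norm (w + x0) - h w)" using up[OF wH] greater by simp
  also have "\<dots> = norm (y + t *\<^sub>R x0) - h y"
    using greater hom[OF wH] by (simp add: yw right_diff_distrib scaleR_add_right[symmetric])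
  finally show ?thesis by simp
next
  case less
  define s where "s = - t"
  have s0: "s > 0" using less s_def by simp
  define w where "w = inverse s *\<^sub>R y"
  have wH: "w \<in> H" unfolding w_def using subspace_scale[OF sH y] .
  have yw: "y = s *\<^sub>R w" unfolding w_def using s0 by simp
  have "h y = s * h w" using hom[OF wH] yw by simp
  moreover have "norm (y + t *\<^sub>R x0) = s * norm (w - x0)"
    using s0 by (simp add: yw s_def scaleR_diff_right[symmetric] norm_minus_commute)
  ultimately have "h y - norm (y + t *\<^sub>R x0) = s * (h w - norm (w - x0))"
    by (simp add: right_diff_distrib)
  also have "\<dots> \<le> s * c" using lo[OF wH] s0 by simp
  finally show ?thesis by (simp add: s_def)
qed

lemma line_decomposition_unique:
  assumes sH: "subspace H" and x0: "x0 \<notin> H" and y: "y1 \<in> H" "y2 \<in> H"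
    and eq: "y1 + t1 *\<^sub>R x0 = y2 + t2 *\<^sub>R x0"
  shows "y1 = y2 \<and> t1 = t2"
proof -
  have "t1 = t2"
  proof (rule ccontr)
    assume ne: "t1 \<noteq> t2"
    have "(t2 - t1) *\<^sub>R x0 = y1 - y2" using eq by (simp add: algebra_simps)
    then have "inverse (t2 - t1) *\<^sub>R ((t2 - t1) *\<^sub>R x0) = inverse (t2 - t1) *\<^sub>R (y1 - y2)"
      by simp
    then have "x0 = inverse (t2 - t1) *\<^sub>R (y1 - y2)" using ne by simp
    then have "x0 \<in> H" using sH y subspace_diff subspace_scale by metis
    with x0 show False by simp
  qed
  then show ?thesis using eq by simp
qed

lemma hb_step:
  fixes h :: "'a::real_normed_vector \<Rightarrow> real"
  assumes ext: "hb_extension F u H h" and x0: "x0 \<notin> H"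
  obtains H' h' where "hb_extension F u H' h'" "H \<subseteq> H'" "x0 \<in> H'" "\<And>x. x \<in> H \<Longrightarrow> h' x = h x"
proof -
  note hb = hb_extensionD[OF ext]
  obtain c where lo: "\<And>y. y \<in> H \<Longrightarrow> h y - norm (y - x0) \<le> c"
    and up: "\<And>w. w \<in> H \<Longrightarrow> c \<le> norm (w + x0) - h w"
    using hb_step_constant[OF ext] by blast
  define H' where "H' = span (insert x0 H)"
  define h' where "h' z = (THE v. \<exists>y t. y \<in> H \<and> z = y + t *\<^sub>R x0 \<and> v = h y + t * c)" for z
  have h'_eq: "h' (y + t *\<^sub>R x0) = h y + t * c" if "y \<in> H" for y t
    unfolding h'_def
    by (rule the_equality) (use that line_decomposition_unique[OF hb(1) x0] in blast)+
  have span_H: "span H = H" using hb(1) by simp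
  have H'I: "y + t *\<^sub>R x0 \<in> H'" if "y \<in> H" for y t
    unfolding H'_def span_breakdown_eq span_H using that by (intro exI[of _ t]) simp
  have H'E: "\<exists>y t. y \<in> H \<and> z = y + t *\<^sub>R x0" if "z \<in> H'" for z
    using that unfolding H'_def span_breakdown_eq span_H by (metis diff_add_cancel)
  have sum_eq: "(y1 + t1 *\<^sub>R x0) + (y2 + t2 *\<^sub>R x0) = (y1 + y2) + (t1 + t2) *\<^sub>R x0"
    and scale_eq: "r *\<^sub>R (y1 + t1 *\<^sub>R x0) = r *\<^sub>R y1 + (r * t1) *\<^sub>R x0" for y1 y2 t1 t2 r
    by (simp_all add: algebra_simps)
  have sH': "subspace H'" unfolding H'_def by (rule subspace_span)
  have HH': "H \<subseteq> H'" and x0H': "x0 \<in> H'"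
    unfolding H'_def using span_superset[of "insert x0 H"] by auto
  have h'H: "h' y = h y" if "y \<in> H" for y
    using h'_eq[OF that, of 0] by simp
  have "hb_extension F u H' h'"
    unfolding hb_extension_def
  proof (intro conjI ballI allI)
    fix a b assume "a \<in> H'" "b \<in> H'"
    then obtain y1 t1 y2 t2 where y: "y1 \<in> H" "y2 \<in> H" "a = y1 + t1 *\<^sub>R x0" "b = y2 + t2 *\<^sub>R x0"
      using H'E by metis
    show "h' (a + b) = h' a + h' b"
      unfolding y sum_eq h'_eq[OF y(1)] h'_eq[OF y(2)] h'_eq[OF subspace_add[OF hb(1) y(1,2)]]
      by (simp add: hb(3)[OF y(1,2)] algebra_simps)
  next
    fix a r assume "a \<in> H'"
    then obtain y1 t1 where y: "y1 \<in> H" "a = y1 + t1 *\<^sub>R x0" using H'E by metis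
    show "h' (r *\<^sub>R a) = r * h' a"
      unfolding y scale_eq h'_eq[OF y(1)] h'_eq[OF subspace_scale[OF hb(1) y(1)]]
      by (simp add: hb(4)[OF y(1)] algebra_simps)
  next
    fix z assume "z \<in> H'"
    then obtain y t where y: "y \<in> H" "z = y + t *\<^sub>R x0" using H'E by metis
    show "h' z \<le> norm z"
      unfolding y h'_eq[OF y(1)] by (rule hb_line_bound[OF hb(1) hb(4) hb(6) lo up y(1)])
  qed (use sH' hb(2) HH' h'H hb(5) in auto)
  then show ?thesis using that HH' x0H' h'H by blast
qed

text \<open>Partial extensions are compared through their graphs, ordered by inclusion.\<close>
definition graph :: "'a set \<Rightarrow> ('a \<Rightarrow> 'b) \<Rightarrow> ('a \<times> 'b) set" where
  "graph H h = (\<lambda>x. (x, h x)) ` H"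

lemma graph_functional:
  assumes "(x, a) \<in> graph H h" "(x, b) \<in> graph H h"
  shows "a = b"
  using assms unfolding graph_def by auto

lemma chain_graph_common:
  assumes C: "C \<in> chains {graph H h | H h. hb_extension F u H h}"
    and x: "(x1, a1) \<in> \<Union>C" "(x2, a2) \<in> \<Union>C"
  obtains H h where "graph H h \<in> C" "hb_extension F u H h" "(x1, a1) \<in> graph H h" "(x2, a2) \<in> graph H h"
proof -
  from x obtain X1 X2 where X: "X1 \<in> C" "X2 \<in> C" "(x1, a1) \<in> X1" "(x2, a2) \<in> X2" by blast
  from chainsD[OF C X(1,2)] obtain X where "X \<in> C" "(x1, a1) \<in> X" "(x2, a2) \<in> X" using X by blast
  moreover from this(1) obtain H h where "X = graph H h" "hb_extension F u H h"
    using C unfolding chains_def by blast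
  ultimately show ?thesis using that by blast
qed

lemma hb_extension_locally:
  fixes h :: "'a::real_normed_vector \<Rightarrow> real"
  assumes F: "F \<subseteq> H" and ne: "H \<noteq> {}"
    and local: "\<And>x y. x \<in> H \<Longrightarrow> y \<in> H \<Longrightarrow> \<exists>H0 h0. hb_extension F u H0 h0 \<and> x \<in> H0 \<and> y \<in> H0
        \<and> H0 \<subseteq> H \<and> (\<forall>z\<in>H0. h z = h0 z)"
  shows "hb_extension F u H h"
proof -
  have pair: "thesis" if "x \<in> H" "y \<in> H"
    and "\<And>H0 h0. hb_extension F u H0 h0 \<Longrightarrow> x \<in> H0 \<Longrightarrow> y \<in> H0 \<Longrightarrow> H0 \<subseteq> H
      \<Longrightarrow> (\<And>z. z \<in> H0 \<Longrightarrow> h z = h0 z) \<Longrightarrow> thesis" for x y thesis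
    using local[OF that(1,2)] that(3) by blast
  show ?thesis
    unfolding hb_extension_def
  proof (intro conjI ballI allI)
    show "subspace H" unfolding subspace_def
    proof (intro conjI ballI allI)
      obtain x where x: "x \<in> H" using ne by blast
      show "0 \<in> H" by (rule pair[OF x x]) (use subspace_0 hb_extensionD(1) in blast)
    next
      fix x y assume "x \<in> H" "y \<in> H"
      then show "x + y \<in> H" by (rule pair) (use subspace_add hb_extensionD(1) in blast)
    next
      fix r x assume x: "x \<in> H"
      show "r *\<^sub>R x \<in> H" by (rule pair[OF x x]) (use subspace_scale hb_extensionD(1) in blast)
    qed
  next
    fix x y assume "x \<in> H" "y \<in> H"
    then show "h (x + y) = h x + h y"
      by (rule pair) (metis hb_extensionD(1,3) subspace_add)
  next
    fix x r assume x: "x \<in> H"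
    show "h (r *\<^sub>R x) = r * h x"
      by (rule pair[OF x x]) (metis hb_extensionD(1,4) subspace_scale)
  next
    fix x assume "x \<in> F"
    then have x: "x \<in> H" using F by blast
    show "h x = u x" by (rule pair[OF x x]) (metis hb_extensionD(5) \<open>x \<in> F\<close>)
  next
    fix x assume x: "x \<in> H"
    show "h x \<le> norm x" by (rule pair[OF x x]) (metis hb_extensionD(6))
  qed (rule F)
qed

lemma hb_chain_union:
  assumes C: "C \<in> chains {graph H h | H h. hb_extension F u H h}" and ne: "C \<noteq> {}"
  shows "\<Union>C \<in> {graph H h | H h. hb_extension F u H h}"
proof -
  note common = chain_graph_common[OF C]
  have funct: "a = b" if "(x, a) \<in> \<Union>C" "(x, b) \<in> \<Union>C" for x a b
    using common[OF that] graph_functional by metis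
  define H where "H = fst ` \<Union>C"
  define h where "h x = (THE a. (x, a) \<in> \<Union>C)" for x
  have h_eq: "h x = a" if "(x, a) \<in> \<Union>C" for x a
    unfolding h_def using that funct by blast
  have in_union: "(x, h x) \<in> \<Union>C" if "x \<in> H" for x
    using that h_eq unfolding H_def by force
  have union_eq: "\<Union>C = graph H h"
    unfolding graph_def H_def using h_eq by force
  have member_agrees: "H0 \<subseteq> H \<and> (\<forall>x\<in>H0. h x = h0 x)" if "graph H0 h0 \<in> C" for H0 h0
  proof -
    have "(x, h0 x) \<in> \<Union>C" if "x \<in> H0" for x using that \<open>graph H0 h0 \<in> C\<close> unfolding graph_def by blast
    then show ?thesis using h_eq unfolding H_def by force
  qed
  obtain H00 h00 where X0: "graph H00 h00 \<in> C" "hb_extension F u H00 h00"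
    using ne C unfolding chains_def by blast
  have "hb_extension F u H h"
  proof (rule hb_extension_locally)
    show "F \<subseteq> H" "H \<noteq> {}"
      using hb_extensionD(1,2)[OF X0(2)] member_agrees[OF X0(1)] subspace_0 by blast+
    fix x1 x2 assume "x1 \<in> H" "x2 \<in> H"
    then obtain H0 h0 where "graph H0 h0 \<in> C" "hb_extension F u H0 h0" "x1 \<in> H0" "x2 \<in> H0"
      using common[OF in_union in_union] unfolding graph_def by blast
    then show "\<exists>H0 h0. hb_extension F u H0 h0 \<and> x1 \<in> H0 \<and> x2 \<in> H0 \<and> H0 \<subseteq> H \<and> (\<forall>z\<in>H0. h z = h0 z)"
      using member_agrees by blast
  qed
  then show ?thesis using union_eq by blast
qed

text \<open>Real Hahn--Banach: a maximal extension graph (Zorn) must be defined everywhere,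
  since otherwise the one-step extension would enlarge it.\<close>
lemma real_hahn_banach:
  fixes u :: "'a::real_normed_vector \<Rightarrow> real"
  assumes start: "hb_extension F u F u"
  obtains U where "linear U" "\<And>x. x \<in> F \<Longrightarrow> U x = u x" "\<And>x. U x \<le> norm x"
proof -
  define A where "A = {graph H h | H h. hb_extension F u H h}"
  have "\<forall>C\<in>chains A. \<exists>U\<in>A. \<forall>X\<in>C. X \<subseteq> U"
  proof
    fix C assume C: "C \<in> chains A"
    show "\<exists>U\<in>A. \<forall>X\<in>C. X \<subseteq> U"
    proof (cases "C = {}")
      case True
      then show ?thesis using start unfolding A_def by blast
    next
      case False
      then show ?thesis using hb_chain_union[OF C[unfolded A_def]] unfolding A_def by blast
    qed
  qed
  from Zorn_Lemma2[OF this] obtain M where M: "M \<in> A" "\<And>X. X \<in> A \<Longrightarrow> M \<subseteq> X \<Longrightarrow> X = M"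
    by blast
  then obtain H h where Mh: "M = graph H h" "hb_extension F u H h" unfolding A_def by blast
  have HU: "H = UNIV"
  proof (rule ccontr)
    assume "H \<noteq> UNIV"
    then obtain x0 where x0: "x0 \<notin> H" by blast
    obtain H' h' where H': "hb_extension F u H' h'" "H \<subseteq> H'" "x0 \<in> H'" "\<And>x. x \<in> H \<Longrightarrow> h' x = h x"
      using hb_step[OF Mh(2) x0] by blast
    have "graph H' h' \<in> A" using H'(1) unfolding A_def by blast
    moreover have "M \<subseteq> graph H' h'" using H' unfolding Mh graph_def by force
    ultimately have "graph H' h' = M" using M by blast
    then show False using H'(3) x0 unfolding Mh graph_def by blast
  qed
  note hb = hb_extensionD[OF Mh(2), unfolded HU]
  have "linear h" by (rule linearI) (use hb in auto)
  then show ?thesis using that hb by auto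
qed

lemma real_hahn_banach_abs:
  fixes u :: "'a::real_normed_vector \<Rightarrow> real"
  assumes W: "subspace W" and add: "\<And>x y. x \<in> W \<Longrightarrow> y \<in> W \<Longrightarrow> u (x + y) = u x + u y"
    and hom: "\<And>x r. x \<in> W \<Longrightarrow> u (r *\<^sub>R x) = r * u x" and bd: "\<And>x. x \<in> W \<Longrightarrow> \<bar>u x\<bar> \<le> norm x"
  obtains U where "linear U" "\<And>x. x \<in> W \<Longrightarrow> U x = u x" "\<And>x. \<bar>U x\<bar> \<le> norm x"
proof -
  have "hb_extension W u W u" unfolding hb_extension_def using W add hom bd abs_le_D1 by blast
  then obtain U where U: "linear U" "\<And>x. x \<in> W \<Longrightarrow> U x = u x" "\<And>x. U x \<le> norm x"
    using real_hahn_banach by blast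
  have "\<bar>U x\<bar> \<le> norm x" for x
    using U(3)[of x] U(3)[of "- x"] linear_neg[OF U(1)] by (simp add: abs_le_iff)
  then show ?thesis using that U by blast
qed

lemma map_poly_of_real_add:
  "map_poly (of_real :: real \<Rightarrow> 'b::{real_algebra_1,comm_ring_1}) (p + q)
     = map_poly of_real p + map_poly of_real q"
  by (rule poly_eqI) (simp add: coeff_map_poly)

lemma map_poly_of_real_mult:
  "map_poly (of_real :: real \<Rightarrow> 'b::{real_algebra_1,comm_ring_1}) (p * q)
     = map_poly of_real p * map_poly of_real q"
  by (rule poly_eqI) (simp add: coeff_map_poly coeff_mult of_real_sum)

lemma map_poly_of_real_power:
  "map_poly (of_real :: real \<Rightarrow> 'b::{real_algebra_1,comm_ring_1}) (p ^ n) = map_poly of_real p ^ n"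
  by (induction n) (simp_all add: map_poly_of_real_mult)

lemma map_poly_of_real_prod:
  "map_poly (of_real :: real \<Rightarrow> 'b::{real_algebra_1,comm_ring_1}) (\<Prod>i\<in>I. f i)
     = (\<Prod>i\<in>I. map_poly of_real (f i))"
  by (induction I rule: infinite_finite_induct) (simp_all add: map_poly_of_real_mult)

lemma map_poly_of_real_inj:
  assumes "map_poly (of_real :: real \<Rightarrow> 'b::{real_algebra_1,comm_ring_1}) p = map_poly of_real q"
  shows "p = q"
proof (rule poly_eqI)
  fix n
  have "coeff (map_poly (of_real :: real \<Rightarrow> 'b) p) n = coeff (map_poly of_real q) n"
    using assms by simp
  then show "coeff p n = coeff q n" by (simp add: coeff_map_poly)
qed

text \<open>The real quadratic \<open>Q_z = (x - z)(x - cnj z) = x\<^sup>2 - 2 Re z x + |z|\<^sup>2\<close>.\<close>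
definition conj_quadratic :: "complex \<Rightarrow> real poly" where
  "conj_quadratic z = [: (cmod z)^2, - 2 * Re z, 1 :]"

lemma conj_quadratic_factor:
  "[:-z, 1:] * [:- cnj z, 1:] = map_poly complex_of_real (conj_quadratic z)"
proof -
  have "z * cnj z = (complex_of_real (cmod z))\<^sup>2" using complex_norm_square[of z] by simp
  moreover have "2 * complex_of_real (Re z) = z + cnj z" using complex_add_cnj[of z] by simp
  ultimately show ?thesis by (simp add: conj_quadratic_def map_poly_pCons algebra_simps)
qed

lemma conj_quadratic_root: "poly (map_poly complex_of_real (conj_quadratic z)) z = 0"
  unfolding conj_quadratic_factor[symmetric] by simp

lemma eval_conj_quadratic:
  "poly (map_poly (of_real :: real \<Rightarrow> 'k::real_normed_field) (conj_quadratic z)) \<xi>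
     = \<xi> * \<xi> - of_real (2 * Re z) * \<xi> + of_real ((cmod z)^2)"
  by (simp add: conj_quadratic_def map_poly_pCons algebra_simps)

lemma real_poly_conj_factorisation:
  fixes G :: "real poly"
  assumes fac: "map_poly complex_of_real G = (\<Prod>i\<in>I. [:- r i, 1:])"
  shows "map_poly complex_of_real G = (\<Prod>i\<in>I. [:- cnj (r i), 1:])"
proof -
  have real_coeffs: "\<And>n. coeff (map_poly complex_of_real G) n \<in> \<real>" by (simp add: coeff_map_poly)
  have "poly (\<Prod>i\<in>I. [:- cnj (r i), 1:]) x = poly (map_poly complex_of_real G) x" for x
  proof -
    have "poly (\<Prod>i\<in>I. [:- cnj (r i), 1:]) x = cnj (\<Prod>i\<in>I. cnj x - r i)"
      by (simp add: poly_prod)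
    also have "(\<Prod>i\<in>I. cnj x - r i) = poly (map_poly complex_of_real G) (cnj x)"
      by (subst fac) (simp add: poly_prod)
    also have "cnj \<dots> = poly (map_poly complex_of_real G) x"
      using poly_cnj_real[OF real_coeffs, of "cnj x"] by simp
    finally show ?thesis .
  qed
  then have "poly (\<Prod>i\<in>I. [:- cnj (r i), 1:]) = poly (map_poly complex_of_real G)" by (rule ext)
  then show ?thesis unfolding poly_eq_poly_eq_iff by simp
qed

text \<open>A monic real polynomial \<open>G\<close>: \<open>G\<^sup>2\<close> is a product of \<open>deg G\<close> such quadratics, one per
  complex root of \<open>G\<close> (fundamental theorem of algebra).\<close>
lemma real_poly_square_factor:
  fixes G :: "real poly"
  assumes lc: "lead_coeff G = 1"
  obtains r where "G * G = (\<Prod>i<degree G. conj_quadratic (r i))"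
    and "\<And>z. poly (map_poly complex_of_real G) z = 0 \<Longrightarrow> \<exists>i<degree G. r i = z"
proof -
  define pC where "pC = map_poly complex_of_real G"
  obtain root where rt: "smult (lead_coeff pC) (\<Prod>i<degree pC. [:-root i, 1:]) = pC"
    using complex_poly_decompose' by blast
  have dg: "degree pC = degree G" unfolding pC_def by (rule degree_map_poly) simp
  have "lead_coeff pC = 1" unfolding pC_def dg[unfolded pC_def] by (simp add: coeff_map_poly lc)
  then have P1: "pC = (\<Prod>i<degree G. [:-root i, 1:])" using rt dg by simp
  have P2: "pC = (\<Prod>i<degree G. [:- cnj (root i), 1:])"
    using real_poly_conj_factorisation P1 unfolding pC_def by blast
  have "map_poly complex_of_real (G * G) = pC * pC" unfolding pC_def by (simp add: map_poly_of_real_mult)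
  also have "\<dots> = (\<Prod>i<degree G. [:-root i, 1:]) * (\<Prod>i<degree G. [:- cnj (root i), 1:])"
    by (rule arg_cong2[of _ _ _ _ "(*)", OF P1 P2])
  also have "\<dots> = (\<Prod>i<degree G. [:-root i, 1:] * [:- cnj (root i), 1:])"
    by (rule prod.distrib[symmetric])
  also have "\<dots> = map_poly complex_of_real (\<Prod>i<degree G. conj_quadratic (root i))"
    unfolding map_poly_of_real_prod conj_quadratic_factor ..
  finally have "G * G = (\<Prod>i<degree G. conj_quadratic (root i))" by (rule map_poly_of_real_inj)
  moreover have "\<exists>i<degree G. root i = z" if "poly (map_poly complex_of_real G) z = 0" for z
  proof -
    have "(\<Prod>i<degree G. z - root i) = 0" using that P1 unfolding pC_def by (simp add: poly_prod)
    then show ?thesis by auto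
  qed
  ultimately show ?thesis using that by blast
qed

lemma prod_lower_bound:
  fixes g :: "nat \<Rightarrow> real"
  assumes fin: "finite I" and i0: "i0 \<in> I" and ge: "\<And>i. i \<in> I \<Longrightarrow> m \<le> g i" and m0: "0 \<le> m"
  shows "g i0 * m ^ (card I - 1) \<le> prod g I"
proof -
  have "m ^ (card I - 1) = (\<Prod>i\<in>I - {i0}. m)" using card_Diff_singleton[OF i0] by simp
  also have "\<dots> \<le> prod g (I - {i0})" by (rule prod_mono) (use ge m0 in auto)
  finally have "g i0 * m ^ (card I - 1) \<le> g i0 * prod g (I - {i0})"
    using ge[OF i0] m0 by (simp add: mult_left_mono)
  also have "\<dots> = prod g I" using prod.remove[OF fin i0, of g] by simp
  finally show ?thesis .
qed

lemma quadratic_value_coercive: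
  fixes \<xi> :: "'k::real_normed_field"
  defines "f \<equiv> \<lambda>z. norm (poly (map_poly of_real (conj_quadratic z)) \<xi>)"
  assumes z: "cmod z > 3 * norm \<xi> + 1"
  shows "f z > f 0"
proof -
  define q where "q = poly (map_poly of_real (conj_quadratic z)) \<xi>"
  have e: "(of_real ((cmod z)^2) :: 'k) = (q - \<xi>*\<xi>) + of_real (2 * Re z) * \<xi>"
    by (simp add: q_def eval_conj_quadratic)
  have "(cmod z)^2 = norm (of_real ((cmod z)^2) :: 'k)" by (subst norm_of_real) simp
  also have "\<dots> \<le> norm (q - \<xi>*\<xi>) + norm (of_real (2 * Re z) * \<xi>)"
    unfolding e by (rule norm_triangle_ineq)
  also have "norm (q - \<xi>*\<xi>) \<le> f z + (norm \<xi>)^2" unfolding f_def q_def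
    using norm_triangle_ineq4[of q "\<xi>*\<xi>"] by (simp add: q_def norm_mult power2_eq_square)
  also have "norm (of_real (2 * Re z) * \<xi>) \<le> 2 * cmod z * norm \<xi>"
    using abs_Re_le_cmod[of z] by (simp add: norm_mult mult_right_mono)
  finally have "(cmod z)^2 \<le> f z + (norm \<xi>)^2 + 2 * cmod z * norm \<xi>" by simp
  then have low: "(cmod z - norm \<xi>)^2 - 2 * (norm \<xi>)^2 \<le> f z"
    by (simp add: power2_eq_square algebra_simps)
  have "(2 * norm \<xi> + 1)^2 \<le> (cmod z - norm \<xi>)^2" using z by (intro power_mono) auto
  moreover have "(2 * norm \<xi> + 1)^2 = 4 * (norm \<xi>)^2 + 4 * norm \<xi> + 1"
    by (simp add: power2_eq_square algebra_simps)
  moreover have "f 0 = (norm \<xi>)^2"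
    unfolding f_def by (simp add: eval_conj_quadratic norm_mult power2_eq_square)
  ultimately show ?thesis using low norm_ge_zero[of \<xi>] zero_le_power2[of "norm \<xi>"] by linarith
qed

lemma quadratic_value_min_attained:
  fixes \<xi> :: "'k::real_normed_field"
  defines "f \<equiv> \<lambda>z. norm (poly (map_poly of_real (conj_quadratic z)) \<xi>)"
  obtains w where "\<And>z. f w \<le> f z"
proof -
  define R where "R = 3 * norm \<xi> + 1"
  have R0: "0 \<le> R" unfolding R_def by simp
  have "continuous_on (cball 0 R) f"
    unfolding f_def by (simp add: eval_conj_quadratic) (intro continuous_intros)
  then obtain w where w: "w \<in> cball 0 R" "\<And>y. y \<in> cball 0 R \<Longrightarrow> f w \<le> f y"
    using continuous_attains_inf[OF compact_cball] R0 by (metis cball_eq_empty not_less)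
  have "f w \<le> f z" for z
  proof (cases "z \<in> cball 0 R")
    case False
    then have "f z > f 0" unfolding f_def using quadratic_value_coercive[of \<xi> z] R_def by simp
    moreover have "f w \<le> f 0" using w(2)[of 0] R0 by simp
    ultimately show ?thesis by simp
  qed (use w in simp)
  then show ?thesis using that by blast
qed

text \<open>Among the minimisers of \<open>z \<mapsto> |Q_z(\<xi>)|\<close> there is one of largest modulus, since the
  minimum set is closed and, by coercivity, bounded.\<close>
lemma quadratic_minimiser_max_modulus:
  fixes \<xi> :: "'k::real_normed_field"
  defines "f \<equiv> \<lambda>z. norm (poly (map_poly of_real (conj_quadratic z)) \<xi>)"
  assumes min: "\<And>z. f w \<le> f z"
  obtains z0 where "f z0 = f w" "\<And>z. f z = f w \<Longrightarrow> cmod z \<le> cmod z0"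
proof -
  define S where "S = {z. f z = f w}"
  have "continuous_on UNIV f"
    unfolding f_def by (simp add: eval_conj_quadratic) (intro continuous_intros)
  then have "closed S" unfolding S_def by (rule closed_Collect_eq[OF _ continuous_on_const])
  moreover have "S \<subseteq> cball 0 (3 * norm \<xi> + 1)"
  proof
    fix z assume z: "z \<in> S"
    show "z \<in> cball 0 (3 * norm \<xi> + 1)"
    proof (rule ccontr)
      assume "z \<notin> cball 0 (3 * norm \<xi> + 1)"
      then have "f 0 < f z" using quadratic_value_coercive[of \<xi> z] unfolding f_def by simp
      then show False using min[of 0] z unfolding S_def by simp
    qed
  qed
  ultimately have S_compact: "compact S" unfolding compact_eq_bounded_closed
    using bounded_subset[OF bounded_cball] by blast
  have S_ne: "S \<noteq> {}" unfolding S_def by auto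
  obtain z0 where "z0 \<in> S" "\<And>y. y \<in> S \<Longrightarrow> cmod y \<le> cmod z0"
    using continuous_attains_sup[OF S_compact S_ne continuous_on_norm_id] by blast
  then show ?thesis using that unfolding S_def by blast
qed

text \<open>Key estimate: if \<open>m\<close> is the minimum, attained at \<open>z0\<close>, and \<open>Q_z1 = Q_z0 + \<epsilon>\<close>, then
  \<open>z1\<close> is a root of \<open>G = Q_z0\<^sup>n - (-\<epsilon>)\<^sup>n\<close>, and factoring \<open>G\<^sup>2\<close> bounds \<open>|Q_z1(\<xi>)|\<close>.\<close>
lemma ostrowski_power_bound:
  fixes \<xi> :: "'k::real_normed_field"
  defines "ev \<equiv> \<lambda>P. poly (map_poly of_real P) \<xi>"
  assumes min: "\<And>z. m \<le> norm (ev (conj_quadratic z))" and m0: "0 \<le> m"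
    and z0: "norm (ev (conj_quadratic z0)) = m"
    and shift: "conj_quadratic z1 = conj_quadratic z0 + [:\<epsilon>:]" and n: "n \<ge> 1"
  shows "norm (ev (conj_quadratic z1)) * m ^ (2 * n - 1) \<le> (\<bar>\<epsilon>\<bar> ^ n + m ^ n)\<^sup>2"
proof -
  define Q where "Q = conj_quadratic z0"
  define G where "G = [: - ((- \<epsilon>) ^ n) :] + Q ^ n"
  have QD: "degree Q = 2" "lead_coeff Q = 1" "Q \<noteq> 0" unfolding Q_def conj_quadratic_def by auto
  have dP: "degree (Q ^ n) = 2 * n" using degree_power_eq[OF QD(3), of n] QD(1) by simp
  have degG: "degree G = 2 * n" unfolding G_def using dP n by (subst degree_add_eq_right) auto
  have "lead_coeff G = lead_coeff (Q ^ n)" unfolding G_def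
    by (rule lead_coeff_add_le) (use dP n in simp)
  then have lcG: "lead_coeff G = 1" by (simp add: lead_coeff_power QD(2))
  obtain r where r: "G * G = (\<Prod>i<degree G. conj_quadratic (r i))"
    and roots: "\<And>z. poly (map_poly complex_of_real G) z = 0 \<Longrightarrow> \<exists>i<degree G. r i = z"
    using real_poly_square_factor[OF lcG] by blast
  text \<open>Since \<open>z1\<close> is a root of its own quadratic, \<open>Q(z1) = -\<epsilon>\<close>; hence \<open>z1\<close> is a root of \<open>G\<close>.\<close>
  have "poly (map_poly complex_of_real Q) z1 = - of_real \<epsilon>"
    using conj_quadratic_root[of z1] unfolding shift map_poly_of_real_add Q_def
    by (simp add: map_poly_pCons algebra_simps eq_neg_iff_add_eq_0)
  then have "poly (map_poly complex_of_real G) z1 = 0"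
    unfolding G_def map_poly_of_real_add map_poly_of_real_power by (simp add: map_poly_pCons)
  then obtain i0 where i0: "i0 < degree G" "r i0 = z1" using roots by blast
  have "ev G * ev G = ev (G * G)" unfolding ev_def map_poly_of_real_mult by simp
  also have "\<dots> = (\<Prod>i<degree G. ev (conj_quadratic (r i)))"
    unfolding r ev_def map_poly_of_real_prod by (simp add: poly_prod)
  finally have evGG: "ev G * ev G = (\<Prod>i<degree G. ev (conj_quadratic (r i)))" .
  have "norm (ev (conj_quadratic z1)) * m ^ (2 * n - 1) \<le> (\<Prod>i<degree G. norm (ev (conj_quadratic (r i))))"
    using prod_lower_bound[of "{..<degree G}" i0 m "\<lambda>i. norm (ev (conj_quadratic (r i)))"] i0 min m0 degG
    by simp
  also have "\<dots> = (norm (ev G))\<^sup>2"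
    unfolding prod_norm evGG[symmetric] by (simp add: norm_mult power2_eq_square)
  also have "\<dots> \<le> (\<bar>\<epsilon>\<bar> ^ n + m ^ n)\<^sup>2"
  proof (rule power_mono)
    have "ev G = - of_real ((- \<epsilon>) ^ n) + (ev Q) ^ n"
      unfolding ev_def G_def map_poly_of_real_add map_poly_of_real_power by (simp add: map_poly_pCons)
    then have "norm (ev G) \<le> norm (of_real ((- \<epsilon>) ^ n) :: 'k) + norm ((ev Q) ^ n)"
      using norm_triangle_ineq[of "- of_real ((- \<epsilon>) ^ n) :: 'k" "(ev Q) ^ n"] by simp
    also have "\<dots> = \<bar>\<epsilon>\<bar> ^ n + m ^ n" using z0 unfolding Q_def by (simp add: norm_power power_abs)
    finally show "norm (ev G) \<le> \<bar>\<epsilon>\<bar> ^ n + m ^ n" .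
  qed simp
  finally show ?thesis .
qed

lemma power_bound_absurd:
  fixes m f1 :: real
  assumes m0: "0 < m" and mf: "m < f1"
    and bound: "\<And>n. n \<ge> 1 \<Longrightarrow> f1 * m ^ (2 * n - 1) \<le> ((m / 2) ^ n + m ^ n)\<^sup>2"
  shows False
proof -
  define \<delta> where "\<delta> = (f1 - m) / (3 * m)"
  have d0: "\<delta> > 0" unfolding \<delta>_def using m0 mf by simp
  obtain n0 where n0: "(1 / 2 :: real) ^ n0 < \<delta>" using real_arch_pow_inv[OF d0, of "1 / 2"] by auto
  define n where "n = Suc n0"
  define t where "t = (1 / 2 :: real) ^ n"
  have t0: "0 < t" "t \<le> 1 / 2" unfolding t_def n_def
    using power_decreasing[of 1 "Suc n0" "1 / 2 :: real"] by auto
  have "(1 / 2 :: real) ^ Suc n0 \<le> (1 / 2) ^ n0" by (rule power_decreasing) auto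
  then have td: "t < \<delta>" using n0 unfolding t_def n_def by linarith
  define a where "a = m ^ n"
  have a0: "a > 0" unfolding a_def using m0 by simp
  have e1: "(m / 2) ^ n = a * t" unfolding a_def t_def by (simp add: power_divide)
  have e2: "m ^ (2 * n - 1) * m = a\<^sup>2" unfolding a_def n_def
    by (simp add: power2_eq_square power_add[symmetric] mult_2 mult_2_right algebra_simps)
  have "f1 * a\<^sup>2 = f1 * m ^ (2 * n - 1) * m" using e2 by simp
  also have "\<dots> \<le> ((m / 2) ^ n + m ^ n)\<^sup>2 * m"
    using bound[of n] m0 unfolding n_def by (intro mult_right_mono) auto
  also have "\<dots> = a\<^sup>2 * (m * (1 + t)\<^sup>2)"
    unfolding e1 a_def[symmetric] by (simp add: power2_eq_square algebra_simps)
  finally have "f1 \<le> m * (1 + t)\<^sup>2" using a0 by (simp add: mult.commute)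
  also have "\<dots> \<le> m * (1 + 3 * t)"
    using m0 t0 by (intro mult_left_mono) (auto simp: power2_eq_square algebra_simps)
  also have "\<dots> < m * (1 + 3 * \<delta>)" using m0 td by simp
  also have "\<dots> = f1" unfolding \<delta>_def using m0 by (simp add: field_simps)
  finally show False by simp
qed

text \<open>Ostrowski: every element of a real normed field is a root of some \<open>Q_z\<close>. A positive
  minimum would be contradicted at a point just above a minimiser of largest modulus.\<close>
lemma ostrowski_root:
  fixes \<xi> :: "'k::real_normed_field"
  obtains z where "poly (map_poly of_real (conj_quadratic z)) \<xi> = 0"
proof -
  define f where "f z = norm (poly (map_poly of_real (conj_quadratic z)) \<xi>)" for z
  obtain w where w: "\<And>z. f w \<le> f z"
    using quadratic_value_min_attained[of \<xi>] unfolding f_def by blast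
  define m where "m = f w"
  have glob: "m \<le> f z" for z using w m_def by simp
  show ?thesis
  proof (cases "m = 0")
    case True
    then show ?thesis using that m_def f_def by simp
  next
    case False
    have m0: "m > 0" using False m_def f_def by simp
    obtain z0 where z0: "f z0 = m" "\<And>z. f z = m \<Longrightarrow> cmod z \<le> cmod z0"
      using quadratic_minimiser_max_modulus[where \<xi>=\<xi> and w=w] w unfolding f_def m_def by blast
    text \<open>Moving \<open>z0\<close> vertically to \<open>z1\<close> raises \<open>|z|\<^sup>2\<close> by \<open>m/2\<close> and leaves the minimum set.\<close>
    define \<epsilon> where "\<epsilon> = m / 2"
    define z1 where "z1 = Complex (Re z0) (sqrt ((Im z0)\<^sup>2 + \<epsilon>))"
    have cz1: "(cmod z1)\<^sup>2 = (cmod z0)\<^sup>2 + \<epsilon>"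
      unfolding z1_def cmod_power2 using m0 \<epsilon>_def by simp
    then have "(cmod z0)\<^sup>2 < (cmod z1)\<^sup>2" using m0 \<epsilon>_def by simp
    then have "cmod z0 < cmod z1" by (rule power_less_imp_less_base) simp
    then have "f z1 \<noteq> m" using z0(2) by force
    then have fz1: "m < f z1" using glob[of z1] by simp
    have shift: "conj_quadratic z1 = conj_quadratic z0 + [:\<epsilon>:]"
      unfolding conj_quadratic_def cz1 by (simp add: z1_def)
    have "f z1 * m ^ (2 * n - 1) \<le> ((m / 2) ^ n + m ^ n)\<^sup>2" if "n \<ge> 1" for n
      using ostrowski_power_bound[of m \<xi> z0 z1 \<epsilon> n] glob z0(1) shift that m0
      unfolding f_def \<epsilon>_def by simp
    then show ?thesis using power_bound_absurd[OF m0 fz1] by blast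
  qed
qed

lemma real_normed_field_element:
  fixes \<xi> :: "'k::real_normed_field"
  shows "(\<exists>r. \<xi> = of_real r) \<or> (\<exists>j a b. j * j = -1 \<and> \<xi> = of_real a + of_real b * j)"
proof -
  obtain z where z: "poly (map_poly of_real (conj_quadratic z)) \<xi> = 0"
    using ostrowski_root by blast
  define a where "a = Re z"
  define b where "b = Im z"
  have sq: "(\<xi> - of_real a) * (\<xi> - of_real a) = - of_real (b\<^sup>2)"
    using z unfolding eval_conj_quadratic a_def b_def cmod_power2
    by (simp add: algebra_simps power2_eq_square)
  show ?thesis
  proof (cases "b = 0")
    case True
    then have "\<xi> = of_real a" using sq by simp
    then show ?thesis by blast
  next
    case False
    define j where "j = (\<xi> - of_real a) / of_real b"
    have "j * j = -1" unfolding j_def using sq False by (simp add: power2_eq_square)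
    moreover have "\<xi> = of_real a + of_real b * j" unfolding j_def using False by simp
    ultimately show ?thesis by blast
  qed
qed

definition complex_embedding :: "'k::real_normed_field \<Rightarrow> complex \<Rightarrow> 'k" where
  "complex_embedding j z = of_real (Re z) + of_real (Im z) * j"

lemma real_normed_field_cases:
  "(\<forall>a::'k::real_normed_field. \<exists>r. a = of_real r) \<or>
   (\<exists>j::'k. j * j = -1 \<and> (\<forall>a. \<exists>z. a = complex_embedding j z))"
proof (cases "\<forall>a::'k. \<exists>r. a = of_real r")
  case False
  then obtain j :: 'k where j: "j * j = -1" by (meson real_normed_field_element)
  have "\<exists>z. x = complex_embedding j z" for x :: 'k
  proof -
    have "\<exists>a b. x = of_real a + of_real b * j"
    proof (cases "\<exists>r. x = of_real r")
      case True
      then show ?thesis by (metis add_0_right mult_zero_left of_real_0)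
    next
      case False
      then obtain j' a b where j': "j' * j' = (-1::'k)" "x = of_real a + of_real b * j'"
        by (meson real_normed_field_element)
      have "(j' - j) * (j' + j) = 0" using j j'(1) by (simp add: algebra_simps)
      then have "j' = j \<or> j' = - j" by (auto simp: eq_neg_iff_add_eq_0)
      then show ?thesis using j' by (metis mult_minus_right of_real_minus mult_minus_left)
    qed
    then show ?thesis unfolding complex_embedding_def by (metis complex.sel)
  qed
  then show ?thesis using j by blast
qed blast

context
  fixes j :: "'k::real_normed_field"
  assumes j: "j * j = -1"
begin

lemma complex_embedding_add: "complex_embedding j (z + w) = complex_embedding j z + complex_embedding j w"
  unfolding complex_embedding_def by (simp add: algebra_simps)

lemma complex_embedding_mult: "complex_embedding j (z * w) = complex_embedding j z * complex_embedding j w"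
proof -
  have "complex_embedding j z * complex_embedding j w
      = of_real (Re z * Re w) + of_real (Im z * Im w) * (j * j) + of_real (Re z * Im w + Im z * Re w) * j"
    unfolding complex_embedding_def by (simp add: algebra_simps)
  then show ?thesis unfolding j complex_embedding_def by (simp add: algebra_simps)
qed

lemma complex_embedding_of_real [simp]: "complex_embedding j (complex_of_real r) = of_real r"
  unfolding complex_embedding_def by simp

lemma complex_embedding_one [simp]: "complex_embedding j 1 = 1"
  unfolding complex_embedding_def by simp

lemma complex_embedding_power: "complex_embedding j (z ^ n) = complex_embedding j z ^ n"
  by (induction n) (simp_all add: complex_embedding_mult)

text \<open>No real number squares to \<open>-1\<close>, so the embedding has trivial kernel.\<close>
lemma complex_embedding_zero_iff: "complex_embedding j z = 0 \<longleftrightarrow> z = 0"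
proof
  assume e: "complex_embedding j z = 0"
  show "z = 0"
  proof (cases "Im z = 0")
    case False
    then have "j = of_real (- Re z / Im z)"
      using e unfolding complex_embedding_def by (simp add: field_simps eq_neg_iff_add_eq_0)
    then have "of_real ((- Re z / Im z) * (- Re z / Im z)) = (-1::'k)" using j by simp
    then have "(- Re z / Im z) * (- Re z / Im z) = -1" by (metis of_real_eq_iff of_real_minus of_real_1)
    moreover have "0 \<le> (- Re z / Im z) * (- Re z / Im z)" by simp
    ultimately show ?thesis by simp
  qed (use e in \<open>simp add: complex_embedding_def complex_eq_iff\<close>)
qed (simp add: complex_embedding_def)

lemma complex_embedding_inj: "complex_embedding j z = complex_embedding j w \<Longrightarrow> z = w"
  using complex_embedding_zero_iff[of "z - w"] complex_embedding_add[of "z - w" w] by simp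

lemma norm_j: "norm j = 1"
proof -
  have "norm j * norm j = 1" using arg_cong[OF j, of norm] by (simp add: norm_mult)
  then have "(norm j - 1) * (norm j + 1) = 0" by (simp add: algebra_simps)
  moreover have "norm j + 1 \<noteq> 0" using norm_ge_zero[of j] by linarith
  ultimately show ?thesis by simp
qed

lemma norm_complex_embedding_le: "norm (complex_embedding j z) \<le> \<bar>Re z\<bar> + \<bar>Im z\<bar>"
  unfolding complex_embedding_def
  using norm_triangle_ineq[of "of_real (Re z) :: 'k" "of_real (Im z) * j"] by (simp add: norm_mult norm_j)

text \<open>A multiplicative norm on \<open>\<complex>\<close> is bounded on the unit circle, so its powers there
  cannot grow: it is at most \<open>1\<close>.\<close>
lemma norm_complex_embedding_unit_le:
  assumes z: "cmod z = 1"
  shows "norm (complex_embedding j z) \<le> 1"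
proof (rule ccontr)
  assume "\<not> ?thesis"
  then obtain k where k: "2 < norm (complex_embedding j z) ^ k" using real_arch_pow by fastforce
  have "norm (complex_embedding j z) ^ k = norm (complex_embedding j (z ^ k))"
    by (simp add: complex_embedding_power norm_power)
  also have "\<dots> \<le> \<bar>Re (z ^ k)\<bar> + \<bar>Im (z ^ k)\<bar>" by (rule norm_complex_embedding_le)
  also have "\<dots> \<le> 2" using abs_Re_le_cmod[of "z ^ k"] abs_Im_le_cmod[of "z ^ k"] z
    by (simp add: norm_power)
  finally show False using k by simp
qed

lemma norm_complex_embedding: "norm (complex_embedding j z) = cmod z"
proof (cases "z = 0")
  case False
  define u where "u = z / of_real (cmod z)"
  have u: "cmod u = 1" "cmod (cnj u) = 1" using False unfolding u_def by (simp_all add: norm_divide)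
  have "u * cnj u = 1" using complex_norm_square[of u] u(1) by simp
  then have "complex_embedding j u * complex_embedding j (cnj u) = 1"
    unfolding complex_embedding_mult[symmetric] by simp
  then have "norm (complex_embedding j u) * norm (complex_embedding j (cnj u)) = 1"
    by (metis norm_mult norm_one)
  moreover have "norm (complex_embedding j u) * norm (complex_embedding j (cnj u))
      \<le> norm (complex_embedding j u)"
    by (rule mult_right_le_one_le) (simp_all add: norm_complex_embedding_unit_le[OF u(2)])
  ultimately have nu: "norm (complex_embedding j u) = 1"
    using norm_complex_embedding_unit_le[OF u(1)] by simp
  have "z = of_real (cmod z) * u" unfolding u_def using False by simp
  then have "complex_embedding j z = of_real (cmod z) * complex_embedding j u"
    by (metis complex_embedding_mult complex_embedding_of_real)
  then show ?thesis using nu by (simp add: norm_mult)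
qed (simp add: complex_embedding_def)

end

definition complex_coord :: "'k::real_normed_field \<Rightarrow> 'k \<Rightarrow> complex" where
  "complex_coord j = inv (complex_embedding j)"

context
  fixes j :: "'k::real_normed_field"
  assumes j: "j * j = -1" and onto: "\<And>a. \<exists>z. a = complex_embedding j z"
begin

lemma complex_embedding_coord: "complex_embedding j (complex_coord j a) = a"
  unfolding complex_coord_def by (metis onto f_inv_into_f rangeI)

lemma complex_coord_eqI: "complex_embedding j z = a \<Longrightarrow> complex_coord j a = z"
  using complex_embedding_coord[of a] complex_embedding_inj[OF j] by metis

lemma complex_coord_add: "complex_coord j (a + b) = complex_coord j a + complex_coord j b"
  by (rule complex_coord_eqI) (simp add: complex_embedding_add[OF j] complex_embedding_coord)

lemma complex_coord_mult: "complex_coord j (a * b) = complex_coord j a * complex_coord j b"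
  by (rule complex_coord_eqI) (simp add: complex_embedding_mult[OF j] complex_embedding_coord)

lemma complex_coord_of_real: "complex_coord j (of_real r) = complex_of_real r"
  by (rule complex_coord_eqI) (simp add: complex_embedding_of_real[OF j])

lemma complex_coord_j: "complex_coord j j = \<i>"
  by (rule complex_coord_eqI) (simp add: complex_embedding_def)

lemma cmod_complex_coord: "cmod (complex_coord j a) = norm a"
  using norm_complex_embedding[OF j, of "complex_coord j a"] by (simp add: complex_embedding_coord)

end

lemma vector_space_field_mult: "vector_space ((*) :: 'k::field \<Rightarrow> 'k \<Rightarrow> 'k)"
  by unfold_locales (simp_all add: algebra_simps)

lemma K_normed_spaceD:
  assumes "K_normed_space sm"
  shows "vector_space sm" "\<And>r x. sm (of_real r) x = r *\<^sub>R x" "\<And>c x. norm (sm c x) = norm c * norm x"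
  using assms unfolding K_normed_space_def by auto

lemma K_functional_intro:
  fixes sm :: "'k::real_normed_field \<Rightarrow> 'a::real_normed_vector \<Rightarrow> 'a" and f :: "'a \<Rightarrow> 'k"
  assumes KN: "K_normed_space sm"
    and add: "\<And>x y. f (x + y) = f x + f y" and hom: "\<And>c x. f (sm c x) = c * f x"
    and bound: "\<And>x. norm (f x) \<le> norm x"
  shows "K_functional sm f"
proof -
  note K = K_normed_spaceD[OF KN]
  have "Vector_Spaces.linear sm (*) f"
    unfolding Vector_Spaces.linear_iff using K(1) vector_space_field_mult add hom by blast
  moreover have "bounded_linear f"
  proof (rule bounded_linear_intro[where K=1])
    show "f (r *\<^sub>R x) = r *\<^sub>R f x" for r x
      using hom[of "of_real r" x] K(2) by (simp add: scaleR_conv_of_real)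
  qed (simp_all add: add bound)
  ultimately show ?thesis unfolding K_functional_def by blast
qed

lemma K_subspace_real_subspace:
  assumes KN: "K_normed_space sm" and W: "module.subspace sm W"
  shows "subspace W"
proof -
  interpret V: vector_space sm by (rule K_normed_spaceD(1)[OF KN])
  show ?thesis using W K_normed_spaceD(2)[OF KN] unfolding V.subspace_def subspace_def by metis
qed

lemma K_normed_space_bounded_linear_scale:
  assumes KN: "K_normed_space sm"
  shows "bounded_linear (sm d)"
proof -
  note K = K_normed_spaceD[OF KN]
  interpret VS: vector_space sm by (rule K(1))
  show ?thesis
  proof (rule bounded_linear_intro[where K="norm d"])
    show "sm d (r *\<^sub>R x) = r *\<^sub>R sm d x" for r x
      using K(2)[of r x] K(2)[of r "sm d x"] by (metis VS.scale_scale mult.commute)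
  qed (simp_all add: VS.scale_right_distrib K(3) mult.commute)
qed

lemma (in vector_space) nonzero_of_dim_pos:
  assumes "dim V \<ge> 1"
  obtains v where "v \<in> V" "v \<noteq> 0"
proof -
  obtain B where B: "B \<subseteq> V" "independent B" "V \<subseteq> span B" "card B = dim V"
    by (rule basis_exists)
  then have "B \<noteq> {}" using assms by auto
  then obtain b where b: "b \<in> B" by blast
  then have "b \<noteq> 0" using B(2) dependent_zero by blast
  then show ?thesis using that b B(1) by blast
qed

lemma K_hahn_banach_real_scalars:
  fixes sm :: "'k::real_normed_field \<Rightarrow> 'a::real_normed_vector \<Rightarrow> 'a" and g :: "'a \<Rightarrow> 'k"
  assumes KN: "K_normed_space sm" and W: "module.subspace sm W"
    and gadd: "\<And>u w. u \<in> W \<Longrightarrow> w \<in> W \<Longrightarrow> g (u + w) = g u + g w"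
    and ghom: "\<And>c u. u \<in> W \<Longrightarrow> g (sm c u) = c * g u"
    and gb: "\<And>u. u \<in> W \<Longrightarrow> norm (g u) \<le> norm u"
    and real: "\<And>a::'k. \<exists>r. a = of_real r"
  obtains f where "K_functional sm f" "\<And>w. w \<in> W \<Longrightarrow> f w = g w" "\<And>x. norm (f x) \<le> norm x"
proof -
  note K = K_normed_spaceD[OF KN]
  define re where "re a = (SOME r. a = of_real r)" for a :: 'k
  have of_real_re: "of_real (re a) = a" for a unfolding re_def by (metis (mono_tags) someI_ex real)
  have re_of_real: "re (of_real r) = r" for r using of_real_re[of "of_real r"] by (metis of_real_eq_iff)
  define u where "u w = re (g w)" for w
  have "u (x + y) = u x + u y" if "x \<in> W" "y \<in> W" for x y
    using re_of_real[of "u x + u y"] gadd[OF that] of_real_re unfolding u_def by (metis of_real_add)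
  moreover have "u (r *\<^sub>R x) = r * u x" if "x \<in> W" for x r
    using re_of_real[of "r * u x"] ghom[OF that, of "of_real r"] K(2) of_real_re unfolding u_def
    by (metis of_real_mult)
  moreover have "\<bar>u x\<bar> \<le> norm x" if "x \<in> W" for x
    using gb[OF that] of_real_re[of "g x"] unfolding u_def by (metis norm_of_real)
  ultimately obtain U where U: "linear U" "\<And>x. x \<in> W \<Longrightarrow> U x = u x" "\<And>x. \<bar>U x\<bar> \<le> norm x"
    using real_hahn_banach_abs[OF K_subspace_real_subspace[OF KN W]] by blast
  define f where "f x = (of_real (U x) :: 'k)" for x
  have "K_functional sm f"
  proof (rule K_functional_intro[OF KN])
    show "f (x + y) = f x + f y" for x y unfolding f_def using linear_add[OF U(1)] by simp
    show "f (sm c x) = c * f x" for c x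
      using K(2)[of "re c" x] of_real_re[of c] linear_scale[OF U(1)] unfolding f_def
      by (metis of_real_mult real_scaleR_def)
    show "norm (f x) \<le> norm x" for x unfolding f_def using U(3) by simp
  qed
  moreover have "f w = g w" if "w \<in> W" for w unfolding f_def using U(2)[OF that] of_real_re u_def by simp
  ultimately show ?thesis using that U(3) unfolding f_def by auto
qed

text \<open>Complexification: a real functional \<open>U\<close> bounded by the norm is the real part of the
  \<open>K\<close>-functional \<open>x \<mapsto> U x - i U (j x)\<close>, which is bounded by the norm as well.\<close>
lemma complexified_functional:
  fixes sm :: "'k::real_normed_field \<Rightarrow> 'a::real_normed_vector \<Rightarrow> 'a" and j :: 'k
  assumes KN: "K_normed_space sm"
    and j: "j * j = -1" and onto: "\<And>a. \<exists>z. a = complex_embedding j z"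
    and U: "linear U" and bound: "\<And>x. \<bar>U x\<bar> \<le> norm x"
  obtains f where "K_functional sm f" "\<And>x. norm (f x) \<le> norm x"
    "\<And>x. complex_coord j (f x) = Complex (U x) (- U (sm j x))"
proof -
  note K = K_normed_spaceD[OF KN]
  interpret V: vector_space sm by (rule K(1))
  note emb_add = complex_embedding_add[OF j] and emb_mult = complex_embedding_mult[OF j]
    and coord_eqI = complex_coord_eqI[OF j onto]
  define F where "F x = Complex (U x) (- U (sm j x))" for x
  define f where "f x = complex_embedding j (F x)" for x
  have coord_f: "complex_coord j (f x) = F x" for x by (rule coord_eqI) (simp add: f_def)
  have F_add: "F (x + y) = F x + F y" for x y
    unfolding F_def V.scale_right_distrib linear_add[OF U] by (simp add: complex_eq_iff)
  have sm_emb: "sm (complex_embedding j \<zeta>) x = Re \<zeta> *\<^sub>R x + Im \<zeta> *\<^sub>R sm j x" for \<zeta> x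
    unfolding complex_embedding_def V.scale_left_distrib V.scale_scale[symmetric] K(2) ..
  have F_hom: "F (sm (complex_embedding j \<zeta>) x) = \<zeta> * F x" for \<zeta> x
  proof -
    have "sm j (sm (complex_embedding j \<zeta>) x) = sm (complex_embedding j (\<i> * \<zeta>)) x"
      unfolding emb_mult by (simp add: complex_embedding_def)
    also have "\<dots> = Re \<zeta> *\<^sub>R sm j x - Im \<zeta> *\<^sub>R x" unfolding sm_emb by simp
    finally have "F (sm (complex_embedding j \<zeta>) x)
        = Complex (U (sm (complex_embedding j \<zeta>) x)) (- U (Re \<zeta> *\<^sub>R sm j x - Im \<zeta> *\<^sub>R x))"
      unfolding F_def by simp
    also have "\<dots> = \<zeta> * F x"
      unfolding sm_emb F_def
      by (simp add: linear_add[OF U] linear_diff[OF U] linear_scale[OF U] complex_eq_iff algebra_simps)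
    finally show ?thesis .
  qed
  have f_add: "f (x + y) = f x + f y" for x y unfolding f_def F_add emb_add ..
  have f_hom: "f (sm c x) = c * f x" for c x
    using F_hom[of "complex_coord j c" x] unfolding f_def complex_embedding_coord[OF j onto]
    by (simp add: emb_mult complex_embedding_coord[OF j onto])
  text \<open>Rotating \<open>x\<close> by the phase of \<open>F x\<close> makes \<open>F\<close> real, so \<open>|F x|\<close> is a value of \<open>U\<close>.\<close>
  have f_bound: "norm (f x) \<le> norm x" for x
  proof (cases "F x = 0")
    case False
    define \<zeta> where "\<zeta> = cnj (F x) / of_real (cmod (F x))"
    have \<zeta>1: "cmod \<zeta> = 1" using False unfolding \<zeta>_def by (simp add: norm_divide)
    have "\<zeta> * F x = of_real (cmod (F x))"
      using False complex_norm_square[of "F x"] unfolding \<zeta>_def by (simp add: field_simps power2_eq_square)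
    then have "cmod (F x) = U (sm (complex_embedding j \<zeta>) x)"
      using F_hom[of \<zeta> x] unfolding F_def by (simp add: complex_eq_iff)
    also have "\<dots> \<le> norm (sm (complex_embedding j \<zeta>) x)" using bound abs_le_D1 by blast
    also have "\<dots> = norm x" unfolding K(3) norm_complex_embedding[OF j] \<zeta>1 by simp
    finally show ?thesis unfolding f_def norm_complex_embedding[OF j] .
  qed (simp add: f_def norm_complex_embedding[OF j])
  show ?thesis
    by (rule that[OF K_functional_intro[OF KN f_add f_hom f_bound] f_bound]) (simp add: coord_f F_def)
qed

text \<open>Hahn--Banach over a field isomorphic to \<open>\<complex>\<close>: extend the real part of \<open>g\<close> and
  complexify; the result agrees with \<open>g\<close> because a \<open>K\<close>-linear map is determined by its real part.\<close>
lemma K_hahn_banach_complex_scalars: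
  fixes sm :: "'k::real_normed_field \<Rightarrow> 'a::real_normed_vector \<Rightarrow> 'a" and g :: "'a \<Rightarrow> 'k"
    and j :: 'k
  assumes KN: "K_normed_space sm" and W: "module.subspace sm W"
    and gadd: "\<And>u w. u \<in> W \<Longrightarrow> w \<in> W \<Longrightarrow> g (u + w) = g u + g w"
    and ghom: "\<And>c u. u \<in> W \<Longrightarrow> g (sm c u) = c * g u"
    and gb: "\<And>u. u \<in> W \<Longrightarrow> norm (g u) \<le> norm u"
    and j: "j * j = -1" and onto: "\<And>a. \<exists>z. a = complex_embedding j z"
  obtains f where "K_functional sm f" "\<And>w. w \<in> W \<Longrightarrow> f w = g w" "\<And>x. norm (f x) \<le> norm x"
proof -
  note K = K_normed_spaceD[OF KN]
  interpret V: vector_space sm by (rule K(1))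
  note coord_add = complex_coord_add[OF j onto] and coord_mult = complex_coord_mult[OF j onto]
  define u where "u w = Re (complex_coord j (g w))" for w
  have "u (x + y) = u x + u y" if "x \<in> W" "y \<in> W" for x y
    unfolding u_def gadd[OF that] coord_add by simp
  moreover have "u (r *\<^sub>R x) = r * u x" if "x \<in> W" for x r
    using ghom[OF that, of "of_real r"] K(2)
    unfolding u_def by (simp add: coord_mult complex_coord_of_real[OF j onto])
  moreover have "\<bar>u x\<bar> \<le> norm x" if "x \<in> W" for x
    using abs_Re_le_cmod[of "complex_coord j (g x)"] gb[OF that]
    unfolding u_def cmod_complex_coord[OF j onto] by linarith
  ultimately obtain U where U: "linear U" "\<And>x. x \<in> W \<Longrightarrow> U x = u x" "\<And>x. \<bar>U x\<bar> \<le> norm x"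
    using real_hahn_banach_abs[OF K_subspace_real_subspace[OF KN W]] by blast
  obtain f where f: "K_functional sm f" "\<And>x. norm (f x) \<le> norm x"
    "\<And>x. complex_coord j (f x) = Complex (U x) (- U (sm j x))"
    using complexified_functional[OF KN j onto U(1,3)] by blast
  have "f w = g w" if w: "w \<in> W" for w
  proof -
    have "U (sm j w) = - Im (complex_coord j (g w))"
      using U(2)[OF V.subspace_scale[OF W w]] ghom[OF w]
      unfolding u_def by (simp add: coord_mult complex_coord_j[OF j onto])
    then have "complex_coord j (f w) = complex_coord j (g w)"
      unfolding f(3) using U(2)[OF w] u_def by (simp add: complex_eq_iff)
    then show ?thesis by (metis complex_embedding_coord[OF j onto])
  qed
  then show ?thesis using that f(1,2) by blast
qed

lemma K_hahn_banach:
  fixes sm :: "'k::real_normed_field \<Rightarrow> 'a::real_normed_vector \<Rightarrow> 'a" and g :: "'a \<Rightarrow> 'k"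
  assumes KN: "K_normed_space sm" and W: "module.subspace sm W"
    and gadd: "\<And>u w. u \<in> W \<Longrightarrow> w \<in> W \<Longrightarrow> g (u + w) = g u + g w"
    and ghom: "\<And>c u. u \<in> W \<Longrightarrow> g (sm c u) = c * g u"
    and gb: "\<And>u. u \<in> W \<Longrightarrow> norm (g u) \<le> norm u"
  obtains f where "K_functional sm f" "\<And>w. w \<in> W \<Longrightarrow> f w = g w" "\<And>x. norm (f x) \<le> norm x"
  using real_normed_field_cases[where 'k='k]
proof
  assume "\<forall>a::'k. \<exists>r. a = of_real r"
  then show ?thesis using K_hahn_banach_real_scalars[OF KN W gadd ghom gb] that by blast
next
  assume "\<exists>j::'k. j * j = -1 \<and> (\<forall>a. \<exists>z. a = complex_embedding j z)"
  then obtain j :: 'k where "j * j = -1" "\<And>a. \<exists>z. a = complex_embedding j z" by blast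
  then show ?thesis using K_hahn_banach_complex_scalars[OF KN W gadd ghom gb] that by blast
qed

lemma onorm_eq_1:
  assumes bl: "bounded_linear f" and b: "\<And>x. norm (f x) \<le> norm x"
    and z: "norm z = 1" "norm (f z) = 1"
  shows "onorm f = 1"
proof (rule antisym)
  show "onorm f \<le> 1" by (rule onorm_bound) (use b in simp_all)
  have "norm (f z) / norm z \<le> onorm f" by (rule le_onorm[OF bl])
  then show "1 \<le> onorm f" using z by simp
qed

lemma norming_extension:
  fixes sm :: "'k::real_normed_field \<Rightarrow> 'a::real_normed_vector \<Rightarrow> 'a" and g :: "'a \<Rightarrow> 'k"
  assumes KN: "K_normed_space sm" and W: "module.subspace sm W"
    and gadd: "\<And>u w. u \<in> W \<Longrightarrow> w \<in> W \<Longrightarrow> g (u + w) = g u + g w"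
    and ghom: "\<And>c u. u \<in> W \<Longrightarrow> g (sm c u) = c * g u"
    and gb: "\<And>u. u \<in> W \<Longrightarrow> norm (g u) \<le> norm u"
    and v: "v \<in> W" "norm v = 1" "g v = 1"
  obtains f where "K_functional sm f" "onorm f = 1" "\<And>w. w \<in> W \<Longrightarrow> f w = g w"
proof -
  obtain f where f: "K_functional sm f" "\<And>w. w \<in> W \<Longrightarrow> f w = g w" "\<And>x. norm (f x) \<le> norm x"
    using K_hahn_banach[OF KN W gadd ghom gb] by blast
  have "onorm f = 1"
    by (rule onorm_eq_1) (use f v K_functional_def in auto)
  then show ?thesis using that f by blast
qed

lemma support_functional:
  fixes sm :: "'k::real_normed_field \<Rightarrow> 'a::real_normed_vector \<Rightarrow> 'a"
  assumes KN: "K_normed_space sm" and z: "norm z = 1"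
  obtains f where "K_functional sm f" "onorm f = 1" "f z = 1"
proof -
  note K = K_normed_spaceD[OF KN]
  interpret V: vector_space sm by (rule K(1))
  define W where "W = range (\<lambda>a. sm a z)"
  have W: "V.subspace W" unfolding W_def
    by (metis V.span_singleton V.subspace_span)
  define g where "g w = (THE a. w = sm a z)" for w
  have g_eq: "g (sm a z) = a" for a
    unfolding g_def by (rule the_equality) (use z in auto)
  have "z \<in> W" "g z = 1" using g_eq[of 1] unfolding W_def by (auto intro: range_eqI[of _ _ 1])
  moreover have "g (u + w) = g u + g w" if "u \<in> W" "w \<in> W" for u w
    using that g_eq unfolding W_def by (auto simp: V.scale_left_distrib[symmetric])
  moreover have "g (sm c u) = c * g u" if "u \<in> W" for c u
    using that g_eq unfolding W_def by auto
  moreover have "norm (g u) \<le> norm u" if "u \<in> W" for u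
    using that g_eq K(3) z unfolding W_def by auto
  ultimately obtain f where "K_functional sm f" "onorm f = 1" "\<And>w. w \<in> W \<Longrightarrow> f w = g w"
    using norming_extension[OF KN W, of g z] z by blast
  then show ?thesis using that \<open>z \<in> W\<close> \<open>g z = 1\<close> by auto
qed

lemma numrad_pos_witness:
  fixes sm :: "'k::real_normed_field \<Rightarrow> 'a::real_normed_vector \<Rightarrow> 'a"
  assumes T: "bounded_linear T" and x: "norm x = 1"
    and f: "K_functional sm f" "onorm f = 1" "f x = 1" and nz: "f (T x) \<noteq> 0"
  shows "numrad sm T > 0"
proof -
  define S where "S = {norm (f (T x)) | x f. norm x = 1 \<and> K_functional sm f \<and> onorm f = 1 \<and> f x = 1}"
  have "bdd_above S" unfolding bdd_above_def
  proof (intro exI ballI)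
    fix s assume "s \<in> S"
    then obtain x f where s: "s = norm (f (T x))" "norm x = 1" "K_functional sm f" "onorm f = 1"
      by (auto simp: S_def)
    have "norm (f (T x)) \<le> onorm f * norm (T x)"
      using s(3) unfolding K_functional_def by (blast intro: onorm)
    also have "\<dots> \<le> onorm T" using s(2,4) onorm[OF T, of x] by simp
    finally show "s \<le> onorm T" using s by simp
  qed
  moreover have "norm (f (T x)) \<in> S" unfolding S_def using x f by blast
  ultimately have "norm (f (T x)) \<le> numrad sm T"
    unfolding numrad_def S_def[symmetric] by (simp add: cSup_upper)
  moreover have "norm (f (T x)) > 0" using nz by simp
  ultimately show ?thesis by linarith
qed

lemma numrad_pos_square_zero:
  fixes sm :: "'k::real_normed_field \<Rightarrow> 'a::real_normed_vector \<Rightarrow> 'a"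
  assumes KN: "K_normed_space sm" and T: "bounded_linear T"
    and sq: "\<And>x. T (T x) = 0" and nz: "T \<noteq> (\<lambda>x. 0)"
  shows "numrad sm T > 0"
proof -
  interpret T: bounded_linear T by (rule T)
  obtain x0 where x0: "T x0 \<noteq> 0" using nz by auto
  define y where "y = T x0"
  define z where "z = x0 + ((2 * norm x0 + 1) / norm y) *\<^sub>R y"
  have y0: "norm y > 0" using x0 y_def by simp
  have Tz: "T z = y" unfolding z_def using sq[of x0] by (simp add: T.add T.scale y_def)
  have "norm (((2 * norm x0 + 1) / norm y) *\<^sub>R y) = 2 * norm x0 + 1" using y0 by simp
  moreover have "norm (((2 * norm x0 + 1) / norm y) *\<^sub>R y) \<le> norm z + norm x0"
    using norm_triangle_ineq4[of z x0] unfolding z_def by simp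
  ultimately have z_big: "norm z > norm x0" by linarith
  then have z0: "z \<noteq> 0" by (metis norm_ge_zero norm_zero not_less)
  define e where "e = (1 / norm z) *\<^sub>R z"
  have ne: "norm e = 1" unfolding e_def using z0 by simp
  obtain f where f: "K_functional sm f" "onorm f = 1" "f e = 1"
    using support_functional[OF KN ne] by blast
  interpret f: bounded_linear f using f(1) unfolding K_functional_def by blast
  show ?thesis
  proof (rule numrad_pos_witness[OF T ne f])
    show "f (T e) \<noteq> 0"
    proof
      assume "f (T e) = 0"
      then have fy: "f y = 0" unfolding e_def T.scale Tz f.scale using z0 by simp
      have "f z = of_real (norm z)"
        using f(3) z0 unfolding e_def f.scale by (simp add: scaleR_conv_of_real field_simps)
      moreover have "f z = f x0" unfolding z_def f.add f.scale fy by simp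
      moreover have "norm (f x0) \<le> norm x0"
        using onorm[OF f.bounded_linear_axioms, of x0] f(2) by simp
      ultimately show False using z_big by simp
    qed
  qed
qed

text \<open>Positivity of the numerical radius in \<open>V\<close> provides a test pair \<open>(v, g)\<close> on \<open>V\<close>
  with \<open>g (A v) \<noteq> 0\<close>; nonemptiness of the defining set needs a nonzero vector of \<open>V\<close>.\<close>
lemma numrad_on_witness:
  fixes sm :: "'k::real_normed_field \<Rightarrow> 'a::real_normed_vector \<Rightarrow> 'a"
  assumes KN: "K_normed_space sm" and V: "module.subspace sm V"
    and v0: "v0 \<in> V" "v0 \<noteq> 0" and pos: "numrad_on sm V A > 0"
  obtains v g where "v \<in> V" "norm v = 1" "g v = 1" "g (A v) \<noteq> 0"
    "\<And>u w. u \<in> V \<Longrightarrow> w \<in> V \<Longrightarrow> g (u + w) = g u + g w"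
    "\<And>c u. u \<in> V \<Longrightarrow> g (sm c u) = c * g u" "\<And>u. u \<in> V \<Longrightarrow> norm (g u) \<le> norm u"
proof -
  note K = K_normed_spaceD[OF KN]
  interpret VS: vector_space sm by (rule K(1))
  define P where "P v g \<longleftrightarrow> v \<in> V \<and> norm v \<le> 1
      \<and> (\<forall>u\<in>V. \<forall>w\<in>V. g (u + w) = g u + g w) \<and> (\<forall>c. \<forall>u\<in>V. g (sm c u) = c * g u)
      \<and> (\<forall>u\<in>V. norm (g u) \<le> norm u) \<and> g v = 1" for v and g :: "'a \<Rightarrow> 'k"
  define T where "T = {norm (g (A v)) | v g. P v g}"
  have numT: "numrad_on sm V A = Sup T" unfolding numrad_on_def T_def P_def ..
  text \<open>The set is nonempty: normalise \<open>v0\<close> and take a support functional.\<close>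
  have "T \<noteq> {}"
  proof -
    define z where "z = sm (of_real (1 / norm v0)) v0"
    have z: "z \<in> V" "norm z = 1" unfolding z_def K(3) using v0 V
      by (simp_all add: VS.subspace_def norm_divide)
    obtain f where f: "K_functional sm f" "onorm f = 1" "f z = 1"
      using support_functional[OF KN z(2)] by blast
    have "P z f"
      unfolding P_def using z f onorm[of f] unfolding K_functional_def Vector_Spaces.linear_iff
      by (auto simp: module_hom_axioms_def)
    then show ?thesis unfolding T_def by blast
  qed
  then obtain t where "t \<in> T" "t > 0" using pos numT by (metis cSup_least not_less)
  then obtain v g where vg: "P v g" "g (A v) \<noteq> 0" unfolding T_def by auto
  then have "1 \<le> norm v" unfolding P_def by (metis norm_one)
  then have "norm v = 1" using vg(1) unfolding P_def by simp
  then show ?thesis using that vg unfolding P_def by blast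
qed

lemma numrad_pos_from_restriction:
  fixes sm :: "'k::real_normed_field \<Rightarrow> 'a::real_normed_vector \<Rightarrow> 'a"
  assumes KN: "K_normed_space sm" and V: "module.subspace sm V"
    and v0: "v0 \<in> V" "v0 \<noteq> 0" and AV: "A ` V \<subseteq> V" and pos: "numrad_on sm V A > 0"
    and L: "bounded_linear L" and c: "c \<noteq> 0" and agree: "\<And>v. v \<in> V \<Longrightarrow> L v = sm c (A v)"
  shows "numrad sm L > 0"
proof -
  obtain v g where v: "v \<in> V" "norm v = 1" "g v = 1" "g (A v) \<noteq> 0"
    and g: "\<And>u w. u \<in> V \<Longrightarrow> w \<in> V \<Longrightarrow> g (u + w) = g u + g w"
      "\<And>c u. u \<in> V \<Longrightarrow> g (sm c u) = c * g u" "\<And>u. u \<in> V \<Longrightarrow> norm (g u) \<le> norm u"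
    using numrad_on_witness[OF KN V v0 pos] by blast
  obtain f where f: "K_functional sm f" "onorm f = 1" "\<And>w. w \<in> V \<Longrightarrow> f w = g w"
    using norming_extension[OF KN V g v(1,2,3)] by blast
  interpret VS: vector_space sm by (rule K_normed_spaceD(1)[OF KN])
  have Av: "A v \<in> V" using AV v(1) by blast
  have "f (L v) = c * g (A v)"
    using agree[OF v(1)] f(3)[OF VS.subspace_scale[OF V Av]] g(2)[OF Av] by simp
  then have "f (L v) \<noteq> 0" using c v(4) by simp
  then show ?thesis using numrad_pos_witness[OF L v(2) f(1,2)] f(3) v(1,3) by simp
qed

text \<open>In particular every nonzero element of \<open>B_V(X,V)\<close> has positive numerical radius: it maps
  into \<open>V\<close> and vanishes on \<open>V\<close>, so its square is zero.\<close>
lemma numrad_pos_BV: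
  fixes sm :: "'k::real_normed_field \<Rightarrow> 'a::real_normed_vector \<Rightarrow> 'a"
  assumes KN: "K_normed_space sm" and T: "T \<in> BV sm V" and nz: "T \<noteq> (\<lambda>x. 0)"
  shows "numrad sm T > 0"
proof (rule numrad_pos_square_zero[OF KN _ _ nz])
  show "bounded_linear T" using T unfolding BV_def K_bounded_op_def by blast
  show "T (T x) = 0" for x using T unfolding BV_def by blast
qed

lemma ZA_element_bounded_linear:
  assumes KN: "K_normed_space sm" and A0: "K_bounded_op sm A0" and L': "L' \<in> BV sm V"
  shows "bounded_linear (\<lambda>x. sm c (A0 x) + L' x)"
  using L' A0 unfolding BV_def K_bounded_op_def
  by (intro bounded_linear_add bounded_linear_compose[OF K_normed_space_bounded_linear_scale[OF KN]])
    auto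

theorem lemma3p1:
  fixes sm :: "'k::{real_normed_field,banach} \<Rightarrow> 'a::banach \<Rightarrow> 'a"
    and V :: "'a set" and n :: nat and A A0 L :: "'a \<Rightarrow> 'a"
  assumes "K_normed_space sm"
    and "module.subspace sm V" and "vector_space.dim sm V = n" and "n \<ge> 1"
    and "K_bounded_op_on sm V A" and "numrad_on sm V A > 0"
    and "K_bounded_op sm A0" and "range A0 \<subseteq> V" and "\<forall>v\<in>V. A0 v = A v"
    and "L \<in> ZA sm V A0" and "L \<noteq> (\<lambda>x. 0)"
  shows "numrad sm L > 0"
proof -
  interpret VS: vector_space sm by (rule K_normed_spaceD(1)[OF assms(1)])
  obtain c L' where L: "L = (\<lambda>x. sm c (A0 x) + L' x)" and L': "L' \<in> BV sm V"
    using assms(10) unfolding ZA_def by blast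
  show ?thesis
  proof (cases "c = 0")
    case True
    then have "L = L'" unfolding L by simp
    then show ?thesis using numrad_pos_BV[OF assms(1) L'] assms(11) by simp
  next
    case False
    have "VS.dim V \<ge> 1" using assms(3,4) by simp
    then obtain v0 where v0: "v0 \<in> V" "v0 \<noteq> 0" by (rule VS.nonzero_of_dim_pos)
    have "L v = sm c (A v)" if "v \<in> V" for v using that assms(9) L' unfolding L BV_def by simp
    moreover have "A ` V \<subseteq> V" using assms(5) unfolding K_bounded_op_on_def by blast
    ultimately show ?thesis
      using numrad_pos_from_restriction[OF assms(1,2) v0 _ assms(6) _ False]
        ZA_element_bounded_linear[OF assms(1,7) L'] unfolding L by blast
  qed
qed

end
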